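(* For every integer $g\geqslant0$, the $\mathbb{Z}/4$-graded Poincaré polynomial of $\mathbb{C}[\alpha,\gamma]/J_g^-$ is \[P_t(J_g^-)=\tfrac12\lfloor g/2\rfloor\big(\lfloor g/2\rfloor+1\big)\,(1+t^2).\]
   Context: $\zeta_k^-\in\mathbb{C}[\alpha,\gamma]$: $\zeta^-_i=0$ for $i<0$, $\zeta^-_0=1$, $\zeta^-_{k+1}=\alpha\zeta^-_k-16k^2\zeta^-_{k-1}+2k(k-1)\gamma\zeta^-_{k-2}$ for $k$ odd and $\zeta^-_{k+1}=\alpha\zeta^-_k+2k(k-1)\gamma\zeta^-_{k-2}$ for $k$ even ($k\geqslant0$); $J^-_k=(\zeta^-_k,\zeta^-_{k+1},\zeta^-_{k+2})$. $\mathbb{C}[\alpha,\gamma]$ is $\mathbb{Z}/4$-graded with $\alpha,\gamma$ of degree $2$; $J_g^-$ is homogeneous. For a $\mathbb{Z}/4$-graded space $V$, $P_t(V)=\sum_{i=0}^3\dim V_i\,t^i\in\mathbb{Z}[t]/(t^4-1)$, and $P_t(J)$ means $P_t(\mathbb{C}[\alpha,\gamma]/J)$. *)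

theory Defs
  imports Complex_Main "HOL-Computational_Algebra.Polynomial"
begin

text \<open>The polynomial ring C[alpha,gamma] is represented as complex poly poly:
  the outer variable is gamma, the inner (coefficient) variable is alpha.
  The coefficient of alpha^i gamma^j in p is coeff (coeff p j) i.\<close>

type_synonym cpoly2 = "complex poly poly"

definition alpha :: cpoly2 where "alpha = [:[:0, 1:]:]"
definition gamma :: cpoly2 where "gamma = [:0, 1:]"

definition cconst :: "complex \<Rightarrow> cpoly2" where "cconst c = [:[:c:]:]"

fun zeta :: "nat \<Rightarrow> cpoly2" where
  "zeta 0 = 1"
| "zeta (Suc k) = alpha * zeta k
     + (if odd k then - (of_nat (16 * k^2)) * zeta (k - 1) else 0)
     + (if k \<ge> 2 then of_nat (2 * k * (k - 1)) * gamma * zeta (k - 2) else 0)"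

definition Jm :: "nat \<Rightarrow> cpoly2 set" where
  "Jm k = {a * zeta k + b * zeta (k + 1) + c * zeta (k + 2) | a b c. True}"

definition hcomp :: "nat \<Rightarrow> cpoly2 set" where
  "hcomp r = {p. \<forall>i j. coeff (coeff p j) i \<noteq> 0 \<longrightarrow> (2 * (i + j)) mod 4 = r}"

text \<open>qdim S J n: the complex vector space S/(J \<inter> S) has dimension n,
  i.e. there are n elements of S forming a basis modulo J.\<close>
definition qdim :: "cpoly2 set \<Rightarrow> cpoly2 set \<Rightarrow> nat \<Rightarrow> bool" where
  "qdim S J n \<longleftrightarrow> (\<exists>v :: nat \<Rightarrow> cpoly2.
      (\<forall>i<n. v i \<in> S)
    \<and> (\<forall>c :: nat \<Rightarrow> complex. (\<Sum>i<n. cconst (c i) * v i) \<in> J \<longrightarrow> (\<forall>i<n. c i = 0))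
    \<and> (\<forall>s\<in>S. \<exists>c :: nat \<Rightarrow> complex. s - (\<Sum>i<n. cconst (c i) * v i) \<in> J))"

end

theory Submission
  imports Defs
begin

text \<open>Modulo \<open>J(2k)\<close> every polynomial has a unique normal form whose \<open>gamma^j\<close>-coefficient
  (\<open>j < k\<close>) has \<open>alpha\<close>-degree below \<open>2(k - j)\<close>: as a \<open>\<complex>[alpha]\<close>-module, \<open>J(2k)\<close> is
  spanned by the \<open>gamma^j zeta(2(k - j))\<close> together with the multiples of \<open>gamma^k\<close>, and the
  \<open>gamma\<close>-free part of \<open>zeta(2m)\<close> is \<open>\<Prod>i<m. alpha^2 - 16(2i+1)^2\<close>, of degree \<open>2m\<close>.
  For \<open>g = 2n + 1\<close> the normal forms of level \<open>n\<close> still work: descending through the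
  recurrence with coefficients that stay nonnegative on the real line shows that the
  \<open>alpha^i zeta(2n+1)\<close>, \<open>i < 2n + 2\<close>, are independent modulo \<open>J(2n+2)\<close>, and a dimension count
  finishes. Finally \<open>(alpha, gamma) \<mapsto> (-alpha, -gamma)\<close> preserves every \<open>J(g)\<close>, so the
  normal-form monomials \<open>alpha^i gamma^j\<close> split according to the parity of \<open>i + j\<close>, i.e. the
  \<open>\<int>/4\<close>-degree \<open>0\<close> or \<open>2\<close>, into two classes of \<open>n(n + 1)/2\<close> elements each.\<close>

section \<open>The recurrence split by parity\<close>

definition zeta_even :: "nat \<Rightarrow> cpoly2" where "zeta_even k = zeta (2 * k)"
definition zeta_odd :: "nat \<Rightarrow> cpoly2" where "zeta_odd k = zeta (2 * k + 1)"

definition kappa :: "nat \<Rightarrow> nat" where "kappa k = 16 * (2 * k + 1)^2"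
definition mu :: "nat \<Rightarrow> nat" where "mu n = 2 * n * (n - 1)"

abbreviation X :: "complex poly" where "X \<equiv> [:0, 1:]"

declare zeta.simps(2) [simp del]

lemma alpha_eq: "alpha = [:X:]"
  by (simp add: alpha_def)

lemma of_nat_cpoly2: "(of_nat n :: cpoly2) = [:[:of_nat n:]:]"
  by (simp add: of_nat_poly)

lemma zeta_odd_eq:
  "zeta_odd k = alpha * zeta_even k + of_nat (mu (2 * k)) * gamma * zeta_even (k - 1)"
proof (cases k)
  case (Suc m)
  then have "2 * k - 2 = 2 * (k - 1)" by simp
  then show ?thesis using Suc by (simp add: zeta_odd_def zeta_even_def zeta.simps(2) mu_def)
qed (simp add: zeta_odd_def zeta_even_def zeta.simps(2) mu_def)

lemma zeta_even_Suc_eq: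
  "zeta_even (Suc k) = alpha * zeta_odd k - of_nat (kappa k) * zeta_even k
     + of_nat (mu (2 * k + 1)) * gamma * zeta_odd (k - 1)"
proof (cases k)
  case (Suc m)
  then have "2 * k + 1 - 2 = 2 * (k - 1) + 1" by simp
  then show ?thesis using Suc
    by (simp add: zeta_odd_def zeta_even_def zeta.simps(2) kappa_def mu_def algebra_simps)
qed (simp add: zeta_odd_def zeta_even_def zeta.simps(2) kappa_def mu_def numeral_2_eq_2)

lemma zeta_even_Suc_rec:
  "zeta_even (Suc m) = [:X^2 - of_nat (kappa m):] * zeta_even m
     + [:of_nat (mu (2 * m) + mu (2 * m + 1)) * X:] * gamma * zeta_even (m - 1)
     + [:of_nat (mu (2 * m + 1) * mu (2 * (m - 1))):] * gamma^2 * zeta_even (m - 2)"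
proof -
  have odd_pred: "zeta_odd (m - 1) = alpha * zeta_even (m - 1)
      + of_nat (mu (2 * (m - 1))) * gamma * zeta_even (m - 2)"
    using zeta_odd_eq[of "m - 1"] by (metis diff_diff_left one_add_one)
  have rec: "zeta_even (Suc m) = (alpha^2 - of_nat (kappa m)) * zeta_even m
     + of_nat (mu (2 * m) + mu (2 * m + 1)) * alpha * gamma * zeta_even (m - 1)
     + of_nat (mu (2 * m + 1) * mu (2 * (m - 1))) * gamma^2 * zeta_even (m - 2)"
    unfolding zeta_even_Suc_eq zeta_odd_eq[of m] odd_pred
    by (simp add: algebra_simps power2_eq_square)
  have c1: "alpha^2 - of_nat (kappa m) = [:X^2 - of_nat (kappa m):]"
    by (simp add: alpha_eq of_nat_cpoly2 power2_eq_square of_nat_poly)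
  have c2: "of_nat (mu (2 * m) + mu (2 * m + 1)) * alpha
      = [:of_nat (mu (2 * m) + mu (2 * m + 1)) * X:]"
    by (simp add: alpha_eq of_nat_cpoly2 of_nat_poly del: of_nat_add)
  have c3: "(of_nat (mu (2 * m + 1) * mu (2 * (m - 1))) :: cpoly2)
      = [:of_nat (mu (2 * m + 1) * mu (2 * (m - 1))):]"
    by (simp add: of_nat_poly)
  show ?thesis using rec unfolding c1 c3 c2[symmetric] by (simp add: mult.assoc)
qed

section \<open>The ideals \<open>Jm g\<close>\<close>

lemma Jm_iff: "x \<in> Jm g \<longleftrightarrow> (\<exists>a b c. x = a * zeta g + b * zeta (g + 1) + c * zeta (g + 2))"
  by (auto simp: Jm_def)

lemma Jm_0: "0 \<in> Jm g"
  unfolding Jm_iff by (intro exI[of _ 0]) simp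

lemma Jm_add: "x \<in> Jm g \<Longrightarrow> y \<in> Jm g \<Longrightarrow> x + y \<in> Jm g"
proof (unfold Jm_iff, elim exE)
  fix a b c a' b' c'
  assume "x = a * zeta g + b * zeta (g + 1) + c * zeta (g + 2)"
    and "y = a' * zeta g + b' * zeta (g + 1) + c' * zeta (g + 2)"
  then show "\<exists>a b c. x + y = a * zeta g + b * zeta (g + 1) + c * zeta (g + 2)"
    by (intro exI[of _ "a + a'"] exI[of _ "b + b'"] exI[of _ "c + c'"]) (simp add: algebra_simps)
qed

lemma Jm_mult_left: "x \<in> Jm g \<Longrightarrow> r * x \<in> Jm g"
proof (unfold Jm_iff, elim exE)
  fix a b c
  assume "x = a * zeta g + b * zeta (g + 1) + c * zeta (g + 2)"
  then show "\<exists>a b c. r * x = a * zeta g + b * zeta (g + 1) + c * zeta (g + 2)"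
    by (intro exI[of _ "r * a"] exI[of _ "r * b"] exI[of _ "r * c"]) (simp add: algebra_simps)
qed

lemma Jm_diff: "x \<in> Jm g \<Longrightarrow> y \<in> Jm g \<Longrightarrow> x - y \<in> Jm g"
  using Jm_add[of x g "(-1) * y"] Jm_mult_left[of y g "-1"] by simp

lemma Jm_sum: "(\<And>i. i \<in> A \<Longrightarrow> f i \<in> Jm g) \<Longrightarrow> sum f A \<in> Jm g"
  by (induction A rule: infinite_finite_induct) (simp_all add: Jm_0 Jm_add)

lemma Jm_smult: "x \<in> Jm g \<Longrightarrow> smult c x \<in> Jm g"
  using Jm_mult_left[of x g "[:c:]"] by simp

lemma zeta_in_Jm: "zeta g \<in> Jm g" "zeta (Suc g) \<in> Jm g" "zeta (Suc (Suc g)) \<in> Jm g"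
  unfolding Jm_iff
    apply (rule exI[of _ 1], rule exI[of _ 0], rule exI[of _ 0], simp)
   apply (rule exI[of _ 0], rule exI[of _ 1], rule exI[of _ 0], simp)
  apply (rule exI[of _ 0], rule exI[of _ 0], rule exI[of _ 1], simp)
  done

lemma Jm_subsetI:
  assumes "zeta g \<in> Jm h" "zeta (Suc g) \<in> Jm h" "zeta (Suc (Suc g)) \<in> Jm h"
  shows "Jm g \<subseteq> Jm h"
proof
  fix x assume "x \<in> Jm g"
  then obtain a b c where "x = a * zeta g + b * zeta (g + 1) + c * zeta (g + 2)"
    unfolding Jm_iff by blast
  then show "x \<in> Jm h" using assms by (simp add: Jm_add Jm_mult_left)
qed

lemma Jm_Suc_subset: "Jm (Suc g) \<subseteq> Jm g"
proof (rule Jm_subsetI)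
  have "zeta (Suc (Suc (Suc g))) = alpha * zeta (Suc (Suc g))
      + (if odd g then - of_nat (16 * (Suc (Suc g))^2) else 0) * zeta (Suc g)
      + (of_nat (2 * Suc (Suc g) * Suc g) * gamma) * zeta g"
    by (simp add: zeta.simps(2))
  then show "zeta (Suc (Suc (Suc g))) \<in> Jm g"
    by (simp only: Jm_add Jm_mult_left zeta_in_Jm)
qed (use zeta_in_Jm in auto)

lemma Jm_antimono: "g \<le> h \<Longrightarrow> Jm h \<subseteq> Jm g"
  by (induction h rule: dec_induct) (use Jm_Suc_subset in blast)+

lemma Jm_of_nat_cancel:
  assumes "n \<noteq> 0" "of_nat n * y \<in> Jm g"
  shows "y \<in> Jm g"
proof -
  have "cconst (1 / of_nat n) * (of_nat n :: cpoly2) = 1"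
    using assms(1) by (simp add: cconst_def of_nat_cpoly2 one_pCons)
  then have "y = cconst (1 / of_nat n) * (of_nat n * y)"
    by (metis mult.assoc mult_1)
  then show ?thesis using Jm_mult_left[OF assms(2)] by metis
qed

lemma zeta_even_odd_in_Jm:
  "zeta_even k \<in> Jm (2 * k)" "zeta_odd k \<in> Jm (2 * k)" "zeta_even (Suc k) \<in> Jm (2 * k)"
  using zeta_in_Jm[of "2 * k"] by (simp_all add: zeta_even_def zeta_odd_def)

lemma gamma_mult_zeta_even_in_Jm: "gamma * zeta_even k \<in> Jm (2 * Suc k)"
proof (rule Jm_of_nat_cancel)
  show "mu (2 * Suc k) \<noteq> 0" by (simp add: mu_def)
  have "of_nat (mu (2 * Suc k)) * (gamma * zeta_even k)
      = zeta_odd (Suc k) - alpha * zeta_even (Suc k)"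
    using zeta_odd_eq[of "Suc k"] by (simp add: algebra_simps)
  then show "of_nat (mu (2 * Suc k)) * (gamma * zeta_even k) \<in> Jm (2 * Suc k)"
    using zeta_even_odd_in_Jm[of "Suc k"] by (simp add: Jm_diff Jm_mult_left)
qed

lemma gamma_mult_zeta_odd_in_Jm: "gamma * zeta_odd k \<in> Jm (2 * Suc k)"
proof (rule Jm_of_nat_cancel)
  show "mu (2 * Suc k + 1) \<noteq> 0" by (simp add: mu_def)
  have "of_nat (mu (2 * Suc k + 1)) * (gamma * zeta_odd k) = zeta_even (Suc (Suc k))
      - alpha * zeta_odd (Suc k) + of_nat (kappa (Suc k)) * zeta_even (Suc k)"
    using zeta_even_Suc_eq[of "Suc k"] by (simp add: algebra_simps)
  then show "of_nat (mu (2 * Suc k + 1)) * (gamma * zeta_odd k) \<in> Jm (2 * Suc k)"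
    using zeta_even_odd_in_Jm[of "Suc k"] by (simp add: Jm_add Jm_diff Jm_mult_left)
qed

lemma gamma_mult_Jm_even: "x \<in> Jm (2 * k) \<Longrightarrow> gamma * x \<in> Jm (2 * Suc k)"
proof -
  assume "x \<in> Jm (2 * k)"
  then obtain a b c where "x = a * zeta_even k + b * zeta_odd k + c * zeta_even (Suc k)"
    unfolding Jm_iff zeta_even_def zeta_odd_def by (auto simp: mult_2)
  then have "gamma * x = a * (gamma * zeta_even k) + b * (gamma * zeta_odd k)
      + (c * gamma) * zeta_even (Suc k)"
    by (simp add: algebra_simps)
  then show ?thesis
    using gamma_mult_zeta_even_in_Jm gamma_mult_zeta_odd_in_Jm zeta_even_odd_in_Jm(1)[of "Suc k"]
    by (simp add: Jm_add Jm_mult_left)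
qed

lemma gamma_power_mult_zeta_even_in_Jm: "gamma ^ j * zeta_even (k - j) \<in> Jm (2 * k)"
proof (induction k arbitrary: j)
  case 0
  show ?case using Jm_mult_left[OF zeta_even_odd_in_Jm(1)[of 0], of "gamma ^ j"] by simp
next
  case (Suc k)
  show ?case
  proof (cases j)
    case 0
    then show ?thesis using zeta_even_odd_in_Jm(1)[of "Suc k"] by simp
  next
    case (Suc i)
    then show ?thesis using gamma_mult_Jm_even[OF Suc.IH[of i]] by (simp add: mult.assoc)
  qed
qed

definition gamma_span :: "nat \<Rightarrow> cpoly2 set" where
  "gamma_span k = {(\<Sum>j<k. [:a j:] * gamma^j * zeta_even (k - j)) + b * gamma^k | a b. True}"

lemma gamma_span_iff:
  "x \<in> gamma_span k \<longleftrightarrow> (\<exists>a b. x = (\<Sum>j<k. [:a j:] * gamma^j * zeta_even (k - j)) + b * gamma^k)"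
  by (auto simp: gamma_span_def)

lemma gamma_span_term: "[:q:] * gamma^i * zeta_even (k - i) \<in> gamma_span k"
proof (cases "i < k")
  case True
  let ?a = "\<lambda>j. if j = i then q else 0"
  have "(\<Sum>j<k. [:?a j:] * gamma^j * zeta_even (k - j)) = [:q:] * gamma^i * zeta_even (k - i)"
    using True by (simp add: if_distrib[of "\<lambda>x. [:x:]"] if_distrib[of "\<lambda>x. x * _"] cong: if_cong)
  then show ?thesis unfolding gamma_span_iff by (auto intro!: exI[of _ ?a] exI[of _ 0])
next
  case False
  then have "[:q:] * gamma^i * zeta_even (k - i) = 0 + ([:q:] * gamma^(i - k)) * gamma^k"
    by (simp add: zeta_even_def mult.assoc power_add[symmetric])
  then show ?thesis unfolding gamma_span_iff
    by (auto intro!: exI[of _ "\<lambda>_. 0"] exI[of _ "[:q:] * gamma^(i - k)"])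
qed

lemma gamma_span_0: "0 \<in> gamma_span k"
  unfolding gamma_span_iff by (auto intro!: exI[of _ "\<lambda>_. 0"] exI[of _ 0])

lemma gamma_span_add: "x \<in> gamma_span k \<Longrightarrow> y \<in> gamma_span k \<Longrightarrow> x + y \<in> gamma_span k"
proof (unfold gamma_span_iff, elim exE)
  fix a b a' b'
  assume "x = (\<Sum>j<k. [:a j:] * gamma^j * zeta_even (k - j)) + b * gamma^k"
    and "y = (\<Sum>j<k. [:a' j:] * gamma^j * zeta_even (k - j)) + b' * gamma^k"
  then have "x + y = (\<Sum>j<k. [:a j + a' j:] * gamma^j * zeta_even (k - j)) + (b + b') * gamma^k"
    by (simp add: sum.distrib smult_add_left algebra_simps)
  then show "\<exists>a b. x + y = (\<Sum>j<k. [:a j:] * gamma^j * zeta_even (k - j)) + b * gamma^k"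
    by (intro exI[of _ "\<lambda>j. a j + a' j"] exI[of _ "b + b'"])
qed

lemma gamma_span_sum: "(\<And>i. i \<in> A \<Longrightarrow> f i \<in> gamma_span k) \<Longrightarrow> sum f A \<in> gamma_span k"
  by (induction A rule: infinite_finite_induct) (simp_all add: gamma_span_0 gamma_span_add)

lemma gamma_span_const_mult: "x \<in> gamma_span k \<Longrightarrow> [:q:] * x \<in> gamma_span k"
proof (unfold gamma_span_iff, elim exE)
  fix a b
  assume "x = (\<Sum>j<k. [:a j:] * gamma^j * zeta_even (k - j)) + b * gamma^k"
  then have "[:q:] * x = (\<Sum>j<k. [:q * a j:] * gamma^j * zeta_even (k - j)) + ([:q:] * b) * gamma^k"
    by (simp add: sum_distrib_left algebra_simps)
  then show "\<exists>a b. [:q:] * x = (\<Sum>j<k. [:a j:] * gamma^j * zeta_even (k - j)) + b * gamma^k"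
    by (intro exI[of _ "\<lambda>j. q * a j"] exI[of _ "[:q:] * b"])
qed

text \<open>Multiplying a generator by \<open>gamma\<close> stays in the span because the three-term
  recurrence of \<open>zeta_even\<close> has coefficients in \<open>\<complex>[alpha]\<close> and raises the \<open>gamma\<close>-degree.\<close>

lemma gamma_mult_gamma_span_term: "gamma * ([:q:] * gamma^i * zeta_even (k - i)) \<in> gamma_span k"
proof (cases "i < k")
  case True
  define m where "m = k - Suc i"
  have km: "k - i = Suc m" "k - (i + 1) = m" "k - (i + 2) = m - 1" "k - (i + 3) = m - 2"
    using True by (simp_all add: m_def)
  have "gamma * ([:q:] * gamma^i * zeta_even (k - i)) =
      [:q * (X^2 - of_nat (kappa m)):] * gamma^(i + 1) * zeta_even (k - (i + 1))
    + [:q * (of_nat (mu (2 * m) + mu (2 * m + 1)) * X):] * gamma^(i + 2) * zeta_even (k - (i + 2))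
    + [:q * of_nat (mu (2 * m + 1) * mu (2 * (m - 1))):] * gamma^(i + 3) * zeta_even (k - (i + 3))"
    unfolding km zeta_even_Suc_rec[of m]
    by (simp add: algebra_simps power2_eq_square numeral_3_eq_3)
  then show ?thesis by (simp only: gamma_span_add gamma_span_term)
next
  case False
  then have "gamma * ([:q:] * gamma^i * zeta_even (k - i)) = [:q:] * gamma^(i + 1) * zeta_even (k - (i + 1))"
    by (simp add: zeta_even_def algebra_simps)
  then show ?thesis by (simp only: gamma_span_term)
qed

lemma gamma_mult_gamma_span: "x \<in> gamma_span k \<Longrightarrow> gamma * x \<in> gamma_span k"
proof (unfold gamma_span_iff[of x], elim exE)
  fix a b
  assume x: "x = (\<Sum>j<k. [:a j:] * gamma^j * zeta_even (k - j)) + b * gamma^k"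
  have "gamma * x = (\<Sum>j<k. gamma * ([:a j:] * gamma^j * zeta_even (k - j))) + (gamma * b) * gamma^k"
    by (simp add: x sum_distrib_left algebra_simps)
  moreover have "(\<Sum>j<k. gamma * ([:a j:] * gamma^j * zeta_even (k - j))) \<in> gamma_span k"
    by (rule gamma_span_sum) (rule gamma_mult_gamma_span_term)
  moreover have "(gamma * b) * gamma^k \<in> gamma_span k"
    unfolding gamma_span_iff by (rule exI[of _ "\<lambda>_. 0"], rule exI[of _ "gamma * b"]) simp
  ultimately show ?thesis by (simp add: gamma_span_add)
qed

lemma gamma_span_mult_left: "x \<in> gamma_span k \<Longrightarrow> r * x \<in> gamma_span k"
proof (induction r)
  case 0
  then show ?case by (simp add: gamma_span_0)
next
  case (pCons q r)
  have "pCons q r * x = [:q:] * x + gamma * (r * x)"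
    by (simp add: gamma_def algebra_simps)
  then show ?case
    using pCons by (metis gamma_span_add gamma_span_const_mult gamma_mult_gamma_span)
qed

lemma Jm_even_eq_gamma_span: "Jm (2 * k) = gamma_span k"
proof
  show "gamma_span k \<subseteq> Jm (2 * k)"
  proof
    fix x assume "x \<in> gamma_span k"
    then obtain a b where x: "x = (\<Sum>j<k. [:a j:] * gamma^j * zeta_even (k - j)) + b * gamma^k"
      unfolding gamma_span_iff by blast
    have "(\<Sum>j<k. [:a j:] * gamma^j * zeta_even (k - j)) \<in> Jm (2 * k)"
      by (rule Jm_sum) (metis mult.assoc Jm_mult_left gamma_power_mult_zeta_even_in_Jm)
    moreover have "b * gamma^k = b * (gamma^k * zeta_even (k - k))"
      by (simp add: zeta_even_def)
    then have "b * gamma^k \<in> Jm (2 * k)"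
      using gamma_power_mult_zeta_even_in_Jm Jm_mult_left by metis
    ultimately show "x \<in> Jm (2 * k)" by (simp add: x Jm_add)
  qed
  show "Jm (2 * k) \<subseteq> gamma_span k"
  proof
    fix x assume "x \<in> Jm (2 * k)"
    then obtain a b c where x: "x = a * zeta_even k + b * zeta_odd k + c * zeta_even (Suc k)"
      unfolding Jm_iff zeta_even_def zeta_odd_def by (auto simp: mult_2)
    have "zeta_even k \<in> gamma_span k"
      using gamma_span_term[of 1 0 k] by simp
    moreover have "zeta_odd k = [:X:] * gamma^0 * zeta_even (k - 0)
        + [:of_nat (mu (2 * k)):] * gamma^1 * zeta_even (k - 1)"
      by (simp add: zeta_odd_eq alpha_eq of_nat_cpoly2 of_nat_poly)
    then have "zeta_odd k \<in> gamma_span k"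
      by (simp only: gamma_span_add gamma_span_term)
    moreover have "zeta_even (Suc k) \<in> gamma_span k"
      unfolding zeta_even_Suc_rec[of k]
      using gamma_span_term[of _ 0 k] gamma_span_term[of _ 1 k] gamma_span_term[of _ 2 k]
      by (simp add: gamma_span_add mult.assoc)
    ultimately show "x \<in> gamma_span k"
      unfolding x by (simp only: gamma_span_add gamma_span_mult_left)
  qed
qed

section \<open>Normal forms modulo \<open>Jm (2 * k)\<close>\<close>

lemma gamma_power_eq_monom: "gamma ^ i = monom 1 i"
proof -
  have "gamma = monom 1 1" by (simp add: gamma_def monom_Suc)
  then have "gamma ^ i = monom 1 1 ^ i" by simp
  then show ?thesis by (simp add: monom_power)
qed

lemma coeff_gamma_power_mult: "coeff (gamma ^ i * p) j = (if j < i then 0 else coeff p (j - i))"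
  by (simp add: gamma_power_eq_monom coeff_monom_mult)

definition zeta_base :: "nat \<Rightarrow> complex poly" where
  "zeta_base m = (\<Prod>i<m. X^2 - of_nat (kappa i))"

lemma coeff_zeta_even_0: "coeff (zeta_even m) 0 = zeta_base m"
proof (induction m)
  case 0
  then show ?case by (simp add: zeta_even_def zeta_base_def)
next
  case (Suc m)
  have "coeff (zeta_even (Suc m)) 0 = (X^2 - of_nat (kappa m)) * coeff (zeta_even m) 0"
    unfolding zeta_even_Suc_rec[of m] by (simp add: coeff_mult_0 gamma_def power2_eq_square)
  then show ?case using Suc by (simp add: zeta_base_def mult.commute)
qed

lemma coeff_zeta_odd_0: "coeff (zeta_odd m) 0 = X * zeta_base m"
  by (simp add: zeta_odd_eq coeff_mult_0 gamma_def alpha_eq coeff_zeta_even_0)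

lemma zeta_base_Suc: "zeta_base (Suc m) = (X^2 - of_nat (kappa m)) * zeta_base m"
  by (simp add: zeta_base_def)

lemma zeta_base_nonzero: "zeta_base m \<noteq> 0"
  and degree_zeta_base: "degree (zeta_base m) = 2 * m"
proof -
  have quad: "X^2 - of_nat c = [:- of_nat c, 0, 1:]" for c
    by (simp add: power2_eq_square of_nat_poly)
  show "zeta_base m \<noteq> 0"
    by (simp add: zeta_base_def quad)
  show "degree (zeta_base m) = 2 * m"
    by (simp add: zeta_base_def quad degree_prod_eq_sum_degree)
qed

definition reduced :: "nat \<Rightarrow> cpoly2 \<Rightarrow> bool" where
  "reduced k s \<longleftrightarrow> (\<forall>j\<ge>k. coeff s j = 0) \<and> (\<forall>j<k. degree (coeff s j) < 2 * (k - j))"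

lemma coeff_gamma_span_elem:
  assumes "j < k" "\<forall>i<j. a i = 0"
  shows "coeff ((\<Sum>i<k. [:a i:] * gamma^i * zeta_even (k - i)) + b * gamma^k) j
    = a j * zeta_base (k - j)"
proof -
  have "coeff ([:a i:] * gamma^i * zeta_even (k - i)) j
      = (if i = j then a j * zeta_base (k - j) else 0)" for i
    using assms(2) by (auto simp: mult.assoc coeff_gamma_power_mult coeff_zeta_even_0)
  moreover have "coeff (b * gamma^k) j = 0"
    using assms(1) by (subst mult.commute) (simp add: coeff_gamma_power_mult)
  ultimately show ?thesis
    using assms(1) by (simp add: coeff_sum)
qed

lemma gamma_span_reduced_eq_0:
  assumes "x \<in> gamma_span k" "reduced k x"
  shows "x = 0"
proof -
  obtain a b where x: "x = (\<Sum>i<k. [:a i:] * gamma^i * zeta_even (k - i)) + b * gamma^k"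
    using assms(1) unfolding gamma_span_iff by blast
  have a0: "\<forall>i<j. a i = 0" if "j \<le> k" for j
    using that
  proof (induction j)
    case (Suc j)
    then have IH: "\<forall>i<j. a i = 0" and "j < k" by simp_all
    have "a j = 0"
    proof (rule ccontr)
      assume "a j \<noteq> 0"
      have "coeff x j = a j * zeta_base (k - j)"
        using coeff_gamma_span_elem[OF \<open>j < k\<close> IH] x by simp
      then have "degree (coeff x j) = degree (a j) + 2 * (k - j)"
        using \<open>a j \<noteq> 0\<close> zeta_base_nonzero by (simp add: degree_mult_eq degree_zeta_base)
      moreover have "degree (coeff x j) < 2 * (k - j)"
        using assms(2) \<open>j < k\<close> by (simp add: reduced_def)
      ultimately show False by simp
    qed
    then show ?case using IH by (auto simp: less_Suc_eq)
  qed simp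
  then have "x = gamma^k * b" using a0[of k] by (simp add: x mult.commute)
  then have "coeff x j = 0" for j
    using assms(2) by (auto simp: reduced_def coeff_gamma_power_mult not_le)
  then show ?thesis by (simp add: poly_eq_iff)
qed

lemma Jm_even_reduced_eq_0: "x \<in> Jm (2 * k) \<Longrightarrow> reduced k x \<Longrightarrow> x = 0"
  using gamma_span_reduced_eq_0 by (simp add: Jm_even_eq_gamma_span)

lemma zeta_base_dvd_coeff_0_Jm_even:
  assumes "x \<in> Jm (2 * k)"
  shows "zeta_base k dvd coeff x 0"
proof (cases k)
  case (Suc m)
  obtain a b where "x = (\<Sum>i<k. [:a i:] * gamma^i * zeta_even (k - i)) + b * gamma^k"
    using assms unfolding Jm_even_eq_gamma_span gamma_span_iff by blast
  then have "coeff x 0 = a 0 * zeta_base k"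
    using coeff_gamma_span_elem[of 0 k a b] Suc by simp
  then show ?thesis by simp
qed (simp add: zeta_base_def)

lemma Jm_even_gamma_cancel:
  assumes "gamma * y \<in> Jm (2 * Suc k)"
  shows "y \<in> Jm (2 * k)"
proof -
  obtain a b where gy: "gamma * y
      = (\<Sum>i<Suc k. [:a i:] * gamma^i * zeta_even (Suc k - i)) + b * gamma^(Suc k)"
    using assms unfolding Jm_even_eq_gamma_span gamma_span_iff by blast
  have "a 0 * zeta_base (Suc k) = coeff (gamma * y) 0"
    using coeff_gamma_span_elem[of 0 "Suc k" a b] gy by simp
  also have "\<dots> = 0" by (simp add: gamma_def)
  finally have "a 0 = 0" using zeta_base_nonzero by simp
  then have "gamma * y = gamma * ((\<Sum>i<k. [:a (Suc i):] * gamma^i * zeta_even (k - i)) + b * gamma^k)"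
    unfolding gy sum.lessThan_Suc_shift by (simp add: sum_distrib_left algebra_simps)
  then have "y = (\<Sum>i<k. [:a (Suc i):] * gamma^i * zeta_even (k - i)) + b * gamma^k"
    by (simp add: gamma_def)
  then show ?thesis
    unfolding Jm_even_eq_gamma_span gamma_span_iff by (intro exI[of _ "\<lambda>i. a (Suc i)"] exI[of _ b])
qed

text \<open>Division with remainder by \<open>zeta_base (k - j)\<close>, one \<open>gamma\<close>-degree \<open>j\<close> at a time.\<close>

lemma Jm_even_reduce_low_degrees:
  "j \<le> k \<Longrightarrow> \<exists>s. (\<forall>i<j. degree (coeff s i) < 2 * (k - i)) \<and> p - s \<in> Jm (2 * k)"
proof (induction j)
  case 0
  then show ?case by (auto intro!: exI[of _ p] simp: Jm_0)
next
  case (Suc j)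
  then obtain s where s: "\<forall>i<j. degree (coeff s i) < 2 * (k - i)" "p - s \<in> Jm (2 * k)"
    by auto
  have jk: "j < k" using Suc.prems by simp
  define q where "q = coeff s j div zeta_base (k - j)"
  define s' where "s' = s - [:q:] * gamma^j * zeta_even (k - j)"
  have cs': "coeff s' i = coeff s i - (if i < j then 0 else q * coeff (zeta_even (k - j)) (i - j))" for i
    by (simp add: s'_def mult.assoc coeff_gamma_power_mult)
  have "degree (coeff s' i) < 2 * (k - i)" if "i < Suc j" for i
  proof (cases "i < j")
    case True
    then show ?thesis using s(1) cs' by simp
  next
    case False
    then have "i = j" using that by simp
    have "coeff s' j = coeff s j mod zeta_base (k - j)"
      using cs'[of j]
      by (simp add: q_def coeff_zeta_even_0 minus_div_mult_eq_mod [symmetric] mult.commute)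
    then show ?thesis
      using \<open>i = j\<close> jk zeta_base_nonzero degree_zeta_base degree_mod_less[of "zeta_base (k - j)" "coeff s j"]
      by (cases "coeff s j mod zeta_base (k - j) = 0") auto
  qed
  moreover have "p - s' = (p - s) + [:q:] * (gamma^j * zeta_even (k - j))"
    by (simp add: s'_def algebra_simps)
  then have "p - s' \<in> Jm (2 * k)"
    by (metis s(2) Jm_add Jm_mult_left gamma_power_mult_zeta_even_in_Jm)
  ultimately show ?case by blast
qed

lemma Jm_even_reduce: "\<exists>s. reduced k s \<and> p - s \<in> Jm (2 * k)"
proof -
  obtain s where s: "\<forall>i<k. degree (coeff s i) < 2 * (k - i)" "p - s \<in> Jm (2 * k)"
    using Jm_even_reduce_low_degrees[of k k p] by auto
  have "s = poly_cutoff k s + gamma^k * poly_shift k s"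
    by (auto simp: poly_eq_iff coeff_poly_cutoff coeff_gamma_power_mult coeff_poly_shift)
  then have "p - poly_cutoff k s = (p - s) + poly_shift k s * (gamma^k * zeta_even (k - k))"
    by (simp add: zeta_even_def algebra_simps)
  then have "p - poly_cutoff k s \<in> Jm (2 * k)"
    by (metis s(2) Jm_add Jm_mult_left gamma_power_mult_zeta_even_in_Jm)
  moreover have "reduced k (poly_cutoff k s)"
    using s(1) by (simp add: reduced_def coeff_poly_cutoff)
  ultimately show ?thesis by blast
qed

section \<open>Descent through the recurrence\<close>

text \<open>Both conditions are imposed only at nonzero reals: the coefficient \<open>X * (a + b)\<close>
  that arises from \<open>alpha * zeta_odd\<close> vanishes at \<open>0\<close>.\<close>

definition nonneg_on_reals :: "complex poly \<Rightarrow> bool" where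
  "nonneg_on_reals p \<longleftrightarrow>
     (\<forall>x::real. x \<noteq> 0 \<longrightarrow> Im (poly p (of_real x)) = 0 \<and> 0 \<le> Re (poly p (of_real x)))"

definition nonvanishing_on_reals :: "complex poly \<Rightarrow> bool" where
  "nonvanishing_on_reals p \<longleftrightarrow> (\<forall>x::real. x \<noteq> 0 \<longrightarrow> poly p (of_real x) \<noteq> 0)"

lemma nonneg_on_reals_add: "nonneg_on_reals p \<Longrightarrow> nonneg_on_reals q \<Longrightarrow> nonneg_on_reals (p + q)"
  and nonneg_on_reals_mult: "nonneg_on_reals p \<Longrightarrow> nonneg_on_reals q \<Longrightarrow> nonneg_on_reals (p * q)"
  and nonneg_on_reals_of_nat: "nonneg_on_reals (of_nat n)"
  and nonneg_on_reals_X_square: "nonneg_on_reals (X^2)"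
  by (simp_all add: nonneg_on_reals_def of_nat_poly power2_eq_square)

lemma nonvanishing_on_reals_mult:
    "nonvanishing_on_reals p \<Longrightarrow> nonvanishing_on_reals q \<Longrightarrow> nonvanishing_on_reals (p * q)"
  and nonvanishing_on_reals_of_nat: "n \<noteq> 0 \<Longrightarrow> nonvanishing_on_reals (of_nat n)"
  and nonvanishing_on_reals_X: "nonvanishing_on_reals X"
  and nonvanishing_on_reals_X_square: "nonvanishing_on_reals (X^2)"
  by (simp_all add: nonvanishing_on_reals_def of_nat_poly)

lemma nonvanishing_on_reals_add:
  assumes "nonneg_on_reals p" "nonneg_on_reals q" "nonvanishing_on_reals p"
  shows "nonvanishing_on_reals (p + q)"
  unfolding nonvanishing_on_reals_def
proof (intro allI impI)
  fix x :: real assume "x \<noteq> 0"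
  then have "Im (poly p x) = 0" "0 \<le> Re (poly p x)" "0 \<le> Re (poly q x)" "poly p x \<noteq> 0"
    using assms by (auto simp: nonneg_on_reals_def nonvanishing_on_reals_def)
  then have "Re (poly (p + q) x) > 0" by (simp add: complex_eq_iff)
  then show "poly (p + q) x \<noteq> 0" by (metis less_irrefl zero_complex.sel(1))
qed

lemma kappa_factor_dvd_cancel:
  assumes "nonvanishing_on_reals h" "(X^2 - of_nat (kappa m)) dvd q * h"
  shows "(X^2 - of_nat (kappa m)) dvd q"
proof -
  define l :: real where "l = 4 * (2 * m + 1)"
  have "l \<noteq> 0" by (simp add: l_def)
  have factors: "X^2 - of_nat (kappa m) = [:- of_real l, 1:] * [:of_real l, 1:]"
    by (simp add: l_def kappa_def of_nat_poly power2_eq_square algebra_simps)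
  have "poly h (of_real l) \<noteq> 0" "poly h (- of_real l) \<noteq> 0"
    using assms(1)[unfolded nonvanishing_on_reals_def, rule_format, of l]
      assms(1)[unfolded nonvanishing_on_reals_def, rule_format, of "- l"] \<open>l \<noteq> 0\<close>
    by simp_all
  moreover obtain k where k: "q * h = ([:- of_real l, 1:] * [:of_real l, 1:]) * k"
    using assms(2) unfolding factors by (auto elim: dvdE)
  then have "poly (q * h) (of_real l) = 0" "poly (q * h) (- of_real l) = 0"
    by simp_all
  ultimately have roots: "poly q (of_real l) = 0" "poly q (- of_real l) = 0" by auto
  then obtain q1 where q1: "q = [:- of_real l, 1:] * q1"
    by (metis dvdE poly_eq_0_iff_dvd)
  have "(- of_real l - of_real l) * poly q1 (- of_real l) = (0 :: complex)"
    using roots(2) unfolding q1 by simp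
  then have "poly q1 (- of_real l) = 0" using \<open>l \<noteq> 0\<close> by simp
  then obtain q2 where "q1 = [:of_real l, 1:] * q2"
    using poly_eq_0_iff_dvd[of q1 "- of_real l"] by (auto elim: dvdE)
  then have "q = ([:- of_real l, 1:] * [:of_real l, 1:]) * q2"
    unfolding q1 by (simp only: mult.assoc)
  then show ?thesis unfolding factors by (rule dvdI)
qed

definition even_form :: "complex poly \<Rightarrow> complex poly \<Rightarrow> nat \<Rightarrow> cpoly2" where
  "even_form a b m = [:a:] * zeta_even m + [:b:] * alpha * zeta_odd m"

definition odd_form :: "complex poly \<Rightarrow> complex poly \<Rightarrow> nat \<Rightarrow> cpoly2" where
  "odd_form a b m = [:a:] * zeta_odd m + [:b:] * alpha * zeta_even m"

lemma coeff_even_form_0: "coeff (even_form a b m) 0 = (a + X^2 * b) * zeta_base m"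
  by (simp add: even_form_def coeff_mult_0 alpha_eq coeff_zeta_odd_0 coeff_zeta_even_0
      algebra_simps power2_eq_square)

lemma coeff_odd_form_0: "coeff (odd_form a b m) 0 = (X * (a + b)) * zeta_base m"
  by (simp add: odd_form_def coeff_mult_0 alpha_eq coeff_zeta_odd_0 coeff_zeta_even_0 algebra_simps)

lemma const_poly_simps:
  "[:p + q:] = [:p:] + [:q:]" "[:p * q:] = [:p:] * [:q:]" "[:p - q:] = [:p:] - [:q:]"
  "[:X:] = alpha" "[:of_nat n:] = of_nat n"
  for p q :: "complex poly"
  by (simp_all add: alpha_eq of_nat_poly)

lemma even_form_reduction:
  "[:X^2 - of_nat (kappa m):] * even_form a b m = [:a + X^2 * b:] * zeta_even (Suc m)
     - gamma * odd_form (of_nat (mu (2 * m + 1)) * (a + X^2 * b))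
                        (of_nat (mu (2 * m)) * (a + of_nat (kappa m) * b)) (m - 1)"
  unfolding even_form_def odd_form_def zeta_even_Suc_eq zeta_odd_eq[of m]
  by (simp only: const_poly_simps power2_eq_square) algebra

lemma odd_form_reduction:
  "[:X^2 - of_nat (kappa m):] * odd_form a b m = [:X * (a + b):] * zeta_even (Suc m)
     - gamma * even_form (of_nat (mu (2 * m)) * (of_nat (kappa m) * a + X^2 * b))
                         (of_nat (mu (2 * m + 1)) * (a + b)) (m - 1)"
  unfolding even_form_def odd_form_def zeta_even_Suc_eq zeta_odd_eq[of m]
  by (simp only: const_poly_simps power2_eq_square) algebra

lemma kappa_factor_dvd_of_Jm:
  assumes "[:q:] * F \<in> Jm (2 * Suc m)" "coeff F 0 = c * zeta_base m" "nonvanishing_on_reals c"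
  shows "(X^2 - of_nat (kappa m)) dvd q"
proof -
  have "zeta_base (Suc m) dvd coeff ([:q:] * F) 0"
    using assms(1) by (rule zeta_base_dvd_coeff_0_Jm_even)
  then have "(X^2 - of_nat (kappa m)) * zeta_base m dvd (q * c) * zeta_base m"
    using assms(2) by (simp add: zeta_base_Suc mult.assoc)
  then have "(X^2 - of_nat (kappa m)) dvd q * c"
    using zeta_base_nonzero dvd_times_right_cancel_iff by blast
  then show ?thesis using assms(3) kappa_factor_dvd_cancel by blast
qed

lemma Jm_even_descend:
  assumes "[:(X^2 - of_nat (kappa m)) * q:] * F \<in> Jm (2 * Suc m)"
    and "[:X^2 - of_nat (kappa m):] * F = [:r:] * zeta_even (Suc m) - gamma * G"
  shows "[:q:] * G \<in> Jm (2 * m)"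
proof (rule Jm_even_gamma_cancel)
  have "[:(X^2 - of_nat (kappa m)) * q:] * F = [:q:] * ([:X^2 - of_nat (kappa m):] * F)"
    by (simp only: const_poly_simps(2) mult_ac)
  also have "\<dots> = [:q * r:] * zeta_even (Suc m) - gamma * ([:q:] * G)"
    unfolding assms(2) by (simp only: const_poly_simps(2) right_diff_distrib mult_ac)
  finally have "gamma * ([:q:] * G)
      = [:q * r:] * zeta_even (Suc m) - [:(X^2 - of_nat (kappa m)) * q:] * F"
    by simp
  moreover have "[:q * r:] * zeta_even (Suc m) \<in> Jm (2 * Suc m)"
    by (rule Jm_mult_left[OF zeta_even_odd_in_Jm(1)])
  ultimately show "gamma * ([:q:] * G) \<in> Jm (2 * Suc m)"
    using assms(1) Jm_diff by metis
qed

text \<open>The two kinds of forms alternate under \<open>Jm_even_descend\<close>, and the positivity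
  hypotheses are what guarantees that each step can divide off one more quadratic factor of
  \<open>zeta_base\<close>.\<close>

lemma zeta_base_dvd_of_forms_in_Jm:
  "(\<forall>q a b. nonneg_on_reals a \<and> nonneg_on_reals b \<and> nonvanishing_on_reals (a + X^2 * b) \<and>
      [:q:] * even_form a b m \<in> Jm (2 * Suc m) \<longrightarrow> zeta_base (Suc m) dvd q)
   \<and> (\<forall>q a b. nonneg_on_reals a \<and> nonneg_on_reals b \<and> nonvanishing_on_reals (a + b) \<and>
      [:q:] * odd_form a b m \<in> Jm (2 * Suc m) \<longrightarrow> zeta_base (Suc m) dvd q)"
proof (induction m)
  case 0
  have base: "zeta_base (Suc 0) = X^2 - of_nat (kappa 0)" by (simp add: zeta_base_def)
  show ?case
  proof (intro conjI allI impI; elim conjE)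
    fix q a b
    assume "nonvanishing_on_reals (a + X^2 * b)" "[:q:] * even_form a b 0 \<in> Jm (2 * Suc 0)"
    then show "zeta_base (Suc 0) dvd q"
      unfolding base using kappa_factor_dvd_of_Jm coeff_even_form_0 by blast
  next
    fix q a b
    assume "nonvanishing_on_reals (a + b)" "[:q:] * odd_form a b 0 \<in> Jm (2 * Suc 0)"
    then show "zeta_base (Suc 0) dvd q"
      unfolding base using kappa_factor_dvd_of_Jm coeff_odd_form_0
        nonvanishing_on_reals_mult nonvanishing_on_reals_X by blast
  qed
next
  case (Suc k)
  let ?m = "Suc k"
  have mu_pos: "mu (2 * ?m) \<noteq> 0" "mu (2 * ?m + 1) \<noteq> 0" by (simp_all add: mu_def)
  show ?case
  proof (intro conjI allI impI; elim conjE)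
    fix q a b
    assume a: "nonneg_on_reals a" and b: "nonneg_on_reals b"
      and ab: "nonvanishing_on_reals (a + X^2 * b)"
      and q: "[:q:] * even_form a b ?m \<in> Jm (2 * Suc ?m)"
    obtain q' where q': "q = (X^2 - of_nat (kappa ?m)) * q'"
      using kappa_factor_dvd_of_Jm[OF q coeff_even_form_0 ab] by (auto elim: dvdE)
    define a' where "a' = of_nat (mu (2 * ?m + 1)) * (a + X^2 * b)"
    define b' where "b' = of_nat (mu (2 * ?m)) * (a + of_nat (kappa ?m) * b)"
    have "[:q':] * odd_form a' b' k \<in> Jm (2 * Suc k)"
      using Jm_even_descend[OF q[unfolded q'] even_form_reduction] by (simp add: a'_def b'_def)
    moreover have "nonneg_on_reals a'" "nonneg_on_reals b'"
      unfolding a'_def b'_def using a b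
      by (auto intro!: nonneg_on_reals_mult nonneg_on_reals_add nonneg_on_reals_of_nat
          nonneg_on_reals_X_square)
    moreover have "nonvanishing_on_reals (a' + b')"
      using \<open>nonneg_on_reals a'\<close> \<open>nonneg_on_reals b'\<close>
    proof (rule nonvanishing_on_reals_add)
      show "nonvanishing_on_reals a'"
        unfolding a'_def using ab mu_pos
        by (auto intro!: nonvanishing_on_reals_mult nonvanishing_on_reals_of_nat)
    qed
    ultimately have "zeta_base (Suc k) dvd q'" using Suc.IH by blast
    then show "zeta_base (Suc ?m) dvd q" unfolding q' zeta_base_Suc[of ?m] by simp
  next
    fix q a b
    assume a: "nonneg_on_reals a" and b: "nonneg_on_reals b"
      and ab: "nonvanishing_on_reals (a + b)"
      and q: "[:q:] * odd_form a b ?m \<in> Jm (2 * Suc ?m)"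
    have Xab: "nonvanishing_on_reals (X * (a + b))"
      using ab nonvanishing_on_reals_X by (rule nonvanishing_on_reals_mult[rotated])
    obtain q' where q': "q = (X^2 - of_nat (kappa ?m)) * q'"
      using kappa_factor_dvd_of_Jm[OF q coeff_odd_form_0 Xab] by (auto elim: dvdE)
    define a' where "a' = of_nat (mu (2 * ?m)) * (of_nat (kappa ?m) * a + X^2 * b)"
    define b' where "b' = of_nat (mu (2 * ?m + 1)) * (a + b)"
    have "[:q':] * even_form a' b' k \<in> Jm (2 * Suc k)"
      using Jm_even_descend[OF q[unfolded q'] odd_form_reduction] by (simp add: a'_def b'_def)
    moreover have "nonneg_on_reals a'" "nonneg_on_reals b'"
      unfolding a'_def b'_def using a b
      by (auto intro!: nonneg_on_reals_mult nonneg_on_reals_add nonneg_on_reals_of_nat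
          nonneg_on_reals_X_square)
    moreover have "nonvanishing_on_reals (a' + X^2 * b')"
    proof -
      have "nonvanishing_on_reals (X^2 * b')"
        unfolding b'_def using ab mu_pos
        by (auto intro!: nonvanishing_on_reals_mult nonvanishing_on_reals_of_nat
            nonvanishing_on_reals_X_square)
      moreover have "nonneg_on_reals (X^2 * b')"
        using \<open>nonneg_on_reals b'\<close> by (auto intro!: nonneg_on_reals_mult nonneg_on_reals_X_square)
      ultimately show ?thesis
        using nonvanishing_on_reals_add \<open>nonneg_on_reals a'\<close> by (metis add.commute)
    qed
    ultimately have "zeta_base (Suc k) dvd q'" using Suc.IH by blast
    then show "zeta_base (Suc ?m) dvd q" unfolding q' zeta_base_Suc[of ?m] by simp
  qed
qed

lemma zeta_odd_multiple_in_Jm_eq_0: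
  assumes "degree p < 2 * Suc n" "[:p:] * zeta_odd n \<in> Jm (2 * Suc n)"
  shows "p = 0"
proof -
  have "[:p:] * odd_form 1 0 n \<in> Jm (2 * Suc n)"
    using assms(2) by (simp add: odd_form_def)
  moreover have "nonneg_on_reals 1" "nonneg_on_reals 0" "nonvanishing_on_reals (1 + 0)"
    using nonneg_on_reals_of_nat[of 1] nonneg_on_reals_of_nat[of 0]
      nonvanishing_on_reals_of_nat[of 1] by simp_all
  ultimately have "zeta_base (Suc n) dvd p"
    using zeta_base_dvd_of_forms_in_Jm[of n] by blast
  then show "p = 0"
    using assms(1) zeta_base_nonzero degree_zeta_base dvd_imp_degree_le by fastforce
qed

section \<open>Normal forms modulo \<open>Jm (2 * n + 1)\<close>\<close>

definition ag_monom :: "nat \<Rightarrow> nat \<Rightarrow> cpoly2" where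
  "ag_monom i j = monom (monom 1 i) j"

definition reduced_exps :: "nat \<Rightarrow> (nat \<times> nat) set" where
  "reduced_exps k = {(i, j). j < k \<and> i < 2 * (k - j)}"

definition reduced_monoms :: "nat \<Rightarrow> cpoly2 set" where
  "reduced_monoms k = (\<lambda>(i, j). ag_monom i j) ` reduced_exps k"

lemma coeff_ag_monom: "coeff (coeff (ag_monom i j) j') i' = (if i' = i \<and> j' = j then 1 else 0)"
  by (simp add: ag_monom_def coeff_monom)

lemma ag_monom_eq_iff: "ag_monom i j = ag_monom i' j' \<longleftrightarrow> i = i' \<and> j = j'"
  by (metis coeff_ag_monom one_neq_zero)

lemma inj_ag_monom: "inj_on (\<lambda>(i, j). ag_monom i j) A"
  by (auto simp: inj_on_def ag_monom_eq_iff)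

lemma ag_monom_nonzero: "ag_monom i j \<noteq> 0"
  using coeff_ag_monom[of i j j i] by auto

lemma finite_reduced_exps: "finite (reduced_exps k)"
  by (rule finite_subset[of _ "{..<2 * k} \<times> {..<k}"]) (auto simp: reduced_exps_def)

lemma reduced_exps_Suc:
  "reduced_exps (Suc k) = (\<lambda>(i, j). (i, Suc j)) ` reduced_exps k \<union> (\<lambda>i. (i, 0)) ` {..<2 * Suc k}"
proof (rule set_eqI)
  fix x :: "nat \<times> nat"
  obtain i j where x: "x = (i, j)" by fastforce
  show "x \<in> reduced_exps (Suc k) \<longleftrightarrow>
      x \<in> (\<lambda>(i, j). (i, Suc j)) ` reduced_exps k \<union> (\<lambda>i. (i, 0)) ` {..<2 * Suc k}"
    by (cases j) (auto simp: x reduced_exps_def image_iff)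
qed

lemma card_reduced_exps: "card (reduced_exps k) = k * (k + 1)"
proof (induction k)
  case 0
  then show ?case by (simp add: reduced_exps_def)
next
  case (Suc k)
  have "card (reduced_exps (Suc k))
      = card ((\<lambda>(i, j). (i, Suc j)) ` reduced_exps k) + card ((\<lambda>i. (i, 0::nat)) ` {..<2 * Suc k})"
    unfolding reduced_exps_Suc by (rule card_Un_disjoint) (auto simp: finite_reduced_exps)
  also have "\<dots> = card (reduced_exps k) + 2 * Suc k"
    by (subst card_image, auto simp: inj_on_def)+
  finally show ?case using Suc by simp
qed

lemma card_reduced_monoms: "card (reduced_monoms k) = k * (k + 1)"
  by (simp add: reduced_monoms_def card_image[OF inj_ag_monom] card_reduced_exps)

lemma coeff_sum_ag_monom:
  assumes "finite T"
  shows "coeff (coeff (\<Sum>(i, j)\<in>T. smult [:c i j:] (ag_monom i j)) j') i'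
    = (if (i', j') \<in> T then c i' j' else 0)"
proof -
  have "coeff (coeff (\<Sum>(i, j)\<in>T. smult [:c i j:] (ag_monom i j)) j') i'
      = (\<Sum>x\<in>T. if x = (i', j') then c i' j' else 0)"
    unfolding coeff_sum by (rule sum.cong) (auto simp: coeff_ag_monom split: if_splits)
  then show ?thesis using assms by (simp add: sum.delta')
qed

lemma sum_ag_monom_coeffs:
  assumes "finite T" "\<And>i j. coeff (coeff x j) i \<noteq> 0 \<Longrightarrow> (i, j) \<in> T"
  shows "x = (\<Sum>(i, j)\<in>T. smult [:coeff (coeff x j) i:] (ag_monom i j))"
  using assms by (auto simp: poly_eq_iff coeff_sum_ag_monom)

lemma reduced_iff_exps:
  "reduced k s \<longleftrightarrow> (\<forall>i j. coeff (coeff s j) i \<noteq> 0 \<longrightarrow> (i, j) \<in> reduced_exps k)"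
proof
  assume red: "reduced k s"
  show "\<forall>i j. coeff (coeff s j) i \<noteq> 0 \<longrightarrow> (i, j) \<in> reduced_exps k"
  proof (intro allI impI)
    fix i j assume nz: "coeff (coeff s j) i \<noteq> 0"
    then have "j < k" using red by (metis coeff_0 not_le reduced_def)
    moreover have "i \<le> degree (coeff s j)" using nz by (rule le_degree)
    ultimately show "(i, j) \<in> reduced_exps k"
      using red by (auto simp: reduced_def reduced_exps_def)
  qed
next
  assume supp: "\<forall>i j. coeff (coeff s j) i \<noteq> 0 \<longrightarrow> (i, j) \<in> reduced_exps k"
  have "coeff s j = 0" if "k \<le> j" for j
  proof (rule poly_eqI)
    fix i
    show "coeff (coeff s j) i = coeff 0 i"
      using supp[rule_format, of j i] that by (auto simp: reduced_exps_def)
  qed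
  moreover have "degree (coeff s j) < 2 * (k - j)" if "j < k" for j
  proof -
    have "degree (coeff s j) \<le> 2 * (k - j) - 1"
    proof (rule degree_le, intro allI impI)
      fix i assume "2 * (k - j) - 1 < i"
      then show "coeff (coeff s j) i = 0"
        using supp[rule_format, of j i] that
        by (cases "coeff (coeff s j) i = 0") (auto simp: reduced_exps_def)
    qed
    then show ?thesis using that by simp
  qed
  ultimately show "reduced k s" by (simp add: reduced_def)
qed

interpretation cvs: vector_space "\<lambda>(c::complex) (p::cpoly2). smult [:c:] p"
proof unfold_locales
  fix a b :: complex and x y :: cpoly2
  show "smult [:a:] (x + y) = smult [:a:] x + smult [:a:] y" by (rule smult_add_right)
  have "[:a + b:] = [:a:] + [:b:]" by simp
  then show "smult [:a + b:] x = smult [:a:] x + smult [:b:] x"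
    by (simp only: smult_add_left)
  show "smult [:a:] (smult [:b:] x) = smult [:a * b:] x" by (simp add: mult.commute)
  show "smult [:1:] x = x" by (simp add: one_pCons[symmetric])
qed

lemma reduced_in_span: "reduced k s \<Longrightarrow> s \<in> cvs.span (reduced_monoms k)"
proof -
  assume "reduced k s"
  then have "s = (\<Sum>(i, j)\<in>reduced_exps k. smult [:coeff (coeff s j) i:] (ag_monom i j))"
    by (intro sum_ag_monom_coeffs finite_reduced_exps) (simp add: reduced_iff_exps)
  also have "\<dots> \<in> cvs.span (reduced_monoms k)"
  proof -
    have "ag_monom i j \<in> cvs.span (reduced_monoms k)" if "(i, j) \<in> reduced_exps k" for i j
      using that by (intro cvs.span_base) (force simp: reduced_monoms_def)
    then show ?thesis by (auto intro!: cvs.span_sum cvs.span_scale)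
  qed
  finally show ?thesis .
qed

lemma reduced_smult_add:
  assumes "reduced k x" "reduced k y"
  shows "reduced k (smult [:c:] x + y)"
  using assms
proof (unfold reduced_iff_exps, intro allI impI)
  fix i j assume "coeff (coeff (smult [:c:] x + y) j) i \<noteq> 0"
  then have "coeff (coeff x j) i \<noteq> 0 \<or> coeff (coeff y j) i \<noteq> 0" by auto
  then show "(i, j) \<in> reduced_exps k" using assms by (auto simp: reduced_iff_exps)
qed

lemma span_reduced_monoms_reduced: "s \<in> cvs.span (reduced_monoms k) \<Longrightarrow> reduced k s"
proof (induction rule: cvs.span_induct_alt)
  case base
  then show ?case by (simp add: reduced_def)
next
  case (step c x y)
  then obtain i j where "x = ag_monom i j" "(i, j) \<in> reduced_exps k"
    by (auto simp: reduced_monoms_def)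
  then have "reduced k x" by (simp add: reduced_iff_exps coeff_ag_monom)
  then show ?case using step.IH by (rule reduced_smult_add)
qed

lemma (in vector_space) span_subset_span_if_independent_card_ge:
  assumes "finite S" "B \<subseteq> span S" "independent B" "card S \<le> card B"
  shows "span S \<subseteq> span B"
proof
  fix a assume a: "a \<in> span S"
  show "a \<in> span B"
  proof (rule ccontr)
    assume "a \<notin> span B"
    then have "independent (insert a B)" "a \<notin> B"
      using assms(3) independent_insertI span_base by blast+
    moreover have "insert a B \<subseteq> span S" using a assms(2) by blast
    ultimately have "finite (insert a B) \<and> card (insert a B) \<le> card S"
      using independent_span_bound[OF assms(1)] by presburger
    then show False using \<open>a \<notin> B\<close> assms(4) by (auto simp: card_insert_disjoint)
  qed
qed

lemma reduced_sum_ag_monom: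
  assumes "T \<subseteq> reduced_exps k"
  shows "reduced k (\<Sum>(i, j)\<in>T. smult [:c i j:] (ag_monom i j))"
proof -
  have "finite T" using assms finite_reduced_exps finite_subset by blast
  then show ?thesis
    using assms by (auto simp: reduced_iff_exps coeff_sum_ag_monom split: if_splits)
qed

lemma subspace_Jm: "cvs.subspace (Jm g)"
  by (simp add: cvs.subspace_def Jm_0 Jm_add Jm_smult)

definition odd_rep :: "nat \<Rightarrow> nat \<Rightarrow> cpoly2" where
  "odd_rep n i = (SOME v. reduced (Suc n) v \<and> [:monom 1 i:] * zeta_odd n - v \<in> Jm (2 * Suc n))"

lemma odd_rep:
  "reduced (Suc n) (odd_rep n i)" "[:monom 1 i:] * zeta_odd n - odd_rep n i \<in> Jm (2 * Suc n)"
  using someI_ex[OF Jm_even_reduce[of "Suc n" "[:monom 1 i:] * zeta_odd n"]]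
  unfolding odd_rep_def by blast+

lemma inj_on_odd_rep: "inj_on (odd_rep n) {..<2 * Suc n}"
proof (rule inj_onI)
  fix i j assume ij: "i \<in> {..<2 * Suc n}" "j \<in> {..<2 * Suc n}" "odd_rep n i = odd_rep n j"
  have "[:monom 1 i - monom 1 j:] * zeta_odd n
      = ([:monom 1 i:] * zeta_odd n - odd_rep n i) - ([:monom 1 j:] * zeta_odd n - odd_rep n j)"
    using ij(3) by (simp add: smult_diff_left)
  then have "[:monom 1 i - monom 1 j:] * zeta_odd n \<in> Jm (2 * Suc n)"
    using odd_rep(2) by (simp add: Jm_diff)
  moreover have "degree (monom 1 i - monom 1 j :: complex poly) \<le> max i j"
    by (rule degree_diff_le) (simp_all add: degree_monom_eq)
  then have "degree (monom 1 i - monom 1 j :: complex poly) < 2 * Suc n"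
    using ij(1,2) by simp
  ultimately have "monom 1 i = (monom 1 j :: complex poly)"
    using zeta_odd_multiple_in_Jm_eq_0 by fastforce
  then show "i = j" by (simp add: monom_eq_iff')
qed

lemma reduced_monoms_disjoint_odd_reps: "reduced_monoms n \<inter> odd_rep n ` A = {}"
proof (rule ccontr)
  assume "reduced_monoms n \<inter> odd_rep n ` A \<noteq> {}"
  then obtain i j i' where ij: "(i, j) \<in> reduced_exps n" and eq: "ag_monom i j = odd_rep n i'"
    by (auto simp: reduced_monoms_def)
  have "ag_monom i j = [:monom 1 i':] * zeta_odd n - ([:monom 1 i':] * zeta_odd n - odd_rep n i')"
    using eq by simp
  moreover have "[:monom 1 i':] * zeta_odd n \<in> Jm (2 * n)"
    using zeta_even_odd_in_Jm(2) by (rule Jm_mult_left)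
  moreover have "[:monom 1 i':] * zeta_odd n - odd_rep n i' \<in> Jm (2 * n)"
    using odd_rep(2) Jm_antimono[of "2 * n" "2 * Suc n"] by auto
  ultimately have "ag_monom i j \<in> Jm (2 * n)" by (metis Jm_diff)
  moreover have "reduced n (ag_monom i j)"
    using ij by (simp add: reduced_iff_exps coeff_ag_monom)
  ultimately show False using Jm_even_reduced_eq_0 ag_monom_nonzero by blast
qed

lemma odd_rep_combination_eq_0:
  assumes "(\<Sum>(i, j)\<in>reduced_exps n. smult [:u i j:] (ag_monom i j))
      + (\<Sum>i<2 * Suc n. smult [:w i:] (odd_rep n i)) = 0"
  shows "\<forall>(i, j)\<in>reduced_exps n. u i j = 0" "\<forall>i<2 * Suc n. w i = 0"
proof -
  define s1 where "s1 = (\<Sum>(i, j)\<in>reduced_exps n. smult [:u i j:] (ag_monom i j))"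
  define s2 where "s2 = (\<Sum>i<2 * Suc n. smult [:w i:] (odd_rep n i))"
  define P where "P = (\<Sum>i<2 * Suc n. monom (w i) i)"
  have "[:P:] * zeta_odd n - s2
      = (\<Sum>i<2 * Suc n. smult [:w i:] ([:monom 1 i:] * zeta_odd n - odd_rep n i))"
    by (simp add: P_def s2_def smult_sum smult_diff_right sum_subtractf smult_monom
        del: sum.lessThan_Suc)
  moreover have "(\<Sum>i<2 * Suc n. smult [:w i:] ([:monom 1 i:] * zeta_odd n - odd_rep n i)) \<in> Jm (2 * Suc n)"
    by (intro Jm_sum Jm_smult odd_rep(2))
  ultimately have D: "[:P:] * zeta_odd n - s2 \<in> Jm (2 * Suc n)"
    by simp
  have "s1 + s2 = 0" using assms by (simp only: s1_def s2_def)
  then have s1_eq: "s1 = ([:P:] * zeta_odd n - s2) - [:P:] * zeta_odd n"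
    by (simp add: eq_neg_iff_add_eq_0)
  have "[:P:] * zeta_odd n - s2 \<in> Jm (2 * n)"
    using D Jm_antimono[of "2 * n" "2 * Suc n"] by auto
  moreover have "[:P:] * zeta_odd n \<in> Jm (2 * n)"
    using zeta_even_odd_in_Jm(2) by (rule Jm_mult_left)
  ultimately have "s1 \<in> Jm (2 * n)"
    unfolding s1_eq by (rule Jm_diff)
  moreover have "reduced n s1"
    unfolding s1_def by (rule reduced_sum_ag_monom) simp
  ultimately have "s1 = 0" by (rule Jm_even_reduced_eq_0)
  show "\<forall>(i, j)\<in>reduced_exps n. u i j = 0"
  proof (intro ballI, clarify)
    fix i j assume "(i, j) \<in> reduced_exps n"
    then show "u i j = 0"
      using arg_cong[OF \<open>s1 = 0\<close>, of "\<lambda>x. coeff (coeff x j) i"]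
      by (simp add: s1_def coeff_sum_ag_monom[OF finite_reduced_exps])
  qed
  have "[:P:] * zeta_odd n \<in> Jm (2 * Suc n)"
    using D \<open>s1 + s2 = 0\<close> \<open>s1 = 0\<close> by simp
  moreover have coeff_P: "coeff P i = (if i < 2 * Suc n then w i else 0)" for i
    by (simp add: P_def coeff_sum coeff_monom)
  moreover have "degree P < 2 * Suc n"
  proof -
    have "degree P \<le> 2 * n + 1" by (rule degree_le) (simp add: coeff_P)
    then show ?thesis by simp
  qed
  ultimately have "P = 0" using zeta_odd_multiple_in_Jm_eq_0 by blast
  then show "\<forall>i<2 * Suc n. w i = 0" using coeff_P by (metis coeff_0)
qed

lemma independent_reduced_monoms_odd_reps:
  "cvs.independent (reduced_monoms n \<union> odd_rep n ` {..<2 * Suc n})" (is "cvs.independent (?B1 \<union> ?B2)")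
proof (rule cvs.independent_if_scalars_zero)
  note disjoint = reduced_monoms_disjoint_odd_reps[of n "{..<2 * Suc n}"]
  have fin: "finite ?B1" "finite ?B2"
    by (simp_all add: reduced_monoms_def finite_reduced_exps)
  then show "finite (?B1 \<union> ?B2)" by simp
  fix f x
  assume comb: "(\<Sum>x\<in>?B1 \<union> ?B2. smult [:f x:] x) = 0" and x: "x \<in> ?B1 \<union> ?B2"
  have B1: "(\<Sum>x\<in>?B1. smult [:f x:] x)
      = (\<Sum>(i, j)\<in>reduced_exps n. smult [:f (ag_monom i j):] (ag_monom i j))"
    unfolding reduced_monoms_def by (subst sum.reindex[OF inj_ag_monom]) (simp add: case_prod_beta')
  have B2: "(\<Sum>x\<in>?B2. smult [:f x:] x)
      = (\<Sum>i<2 * Suc n. smult [:f (odd_rep n i):] (odd_rep n i))"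
    unfolding sum.reindex[OF inj_on_odd_rep] by (simp only: comp_def)
  have "(\<Sum>(i, j)\<in>reduced_exps n. smult [:f (ag_monom i j):] (ag_monom i j))
      + (\<Sum>i<2 * Suc n. smult [:f (odd_rep n i):] (odd_rep n i)) = 0"
    using comb by (simp only: sum.union_disjoint[OF fin disjoint] B1 B2)
  from odd_rep_combination_eq_0[OF this] show "f x = 0"
    using x by (auto simp: reduced_monoms_def)
qed

text \<open>The normal forms of level \<open>n\<close> and the reduced \<open>alpha^i zeta_odd n\<close>, \<open>i < 2n + 2\<close>, are
  \<open>n(n + 1) + 2(n + 1)\<close> independent normal forms of level \<open>n + 1\<close>, so they span all
  \<open>(n + 1)(n + 2)\<close>-dimensional normal forms of that level.\<close>

lemma Jm_odd_reduce: "\<exists>s. reduced n s \<and> p - s \<in> Jm (2 * n + 1)"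
proof -
  let ?B1 = "reduced_monoms n" and ?B2 = "odd_rep n ` {..<2 * Suc n}"
  have Jm_sub: "Jm (2 * Suc n) \<subseteq> Jm (2 * n + 1)"
    using Jm_Suc_subset[of "2 * n + 1"] by simp
  have "card (?B1 \<union> ?B2) = card ?B1 + card ?B2"
    using reduced_monoms_disjoint_odd_reps
    by (intro card_Un_disjoint) (simp_all add: reduced_monoms_def finite_reduced_exps)
  moreover have "card ?B2 = 2 * Suc n"
    using card_image[OF inj_on_odd_rep] by simp
  ultimately have "card (reduced_monoms (Suc n)) \<le> card (?B1 \<union> ?B2)"
    by (simp add: card_reduced_monoms)
  moreover have "?B1 \<subseteq> reduced_monoms (Suc n)"
    by (auto simp: reduced_monoms_def reduced_exps_def)
  then have "?B1 \<union> ?B2 \<subseteq> cvs.span (reduced_monoms (Suc n))"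
    using odd_rep(1) reduced_in_span cvs.span_superset by blast
  ultimately have span: "cvs.span (reduced_monoms (Suc n)) \<subseteq> cvs.span (?B1 \<union> ?B2)"
    using independent_reduced_monoms_odd_reps
    by (intro cvs.span_subset_span_if_independent_card_ge) (auto simp: reduced_monoms_def finite_reduced_exps)
  obtain t where t: "reduced (Suc n) t" "p - t \<in> Jm (2 * Suc n)"
    using Jm_even_reduce by blast
  then have "t \<in> cvs.span (?B1 \<union> ?B2)" using span reduced_in_span by blast
  then obtain x y where xy: "t = x + y" "x \<in> cvs.span ?B1" "y \<in> cvs.span ?B2"
    unfolding cvs.span_Un by blast
  have "?B2 \<subseteq> Jm (2 * n + 1)"
  proof
    fix v assume "v \<in> ?B2"
    then obtain i where v: "v = odd_rep n i" by blast
    have "zeta_odd n \<in> Jm (2 * n + 1)"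
      using zeta_in_Jm(1)[of "2 * n + 1"] by (simp add: zeta_odd_def)
    then have "[:monom 1 i:] * zeta_odd n \<in> Jm (2 * n + 1)"
      by (rule Jm_mult_left)
    moreover have "[:monom 1 i:] * zeta_odd n - odd_rep n i \<in> Jm (2 * n + 1)"
      using odd_rep(2) Jm_sub by blast
    ultimately have "[:monom 1 i:] * zeta_odd n - ([:monom 1 i:] * zeta_odd n - odd_rep n i)
        \<in> Jm (2 * n + 1)"
      by (rule Jm_diff)
    then show "v \<in> Jm (2 * n + 1)" by (simp add: v)
  qed
  then have "y \<in> Jm (2 * n + 1)" using xy(3) cvs.span_minimal[OF _ subspace_Jm] by blast
  moreover have "p - x = (p - t) + y" using xy(1) by simp
  moreover have "p - t \<in> Jm (2 * n + 1)"
    using t(2) Jm_sub by blast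
  ultimately have "p - x \<in> Jm (2 * n + 1)"
    using Jm_add by metis
  then show ?thesis using xy(2) span_reduced_monoms_reduced by blast
qed

section \<open>The sign involution\<close>

lemma map_poly_additive:
  assumes "\<And>x y. f (x + y) = f x + f y" "f 0 = 0"
  shows "map_poly f (p + q) = map_poly f p + map_poly f q"
  by (rule poly_eqI) (simp add: coeff_map_poly assms)

lemma map_poly_multiplicative:
  assumes "\<And>x y. f (x + y) = f x + f y" "\<And>x y. f (x * y) = f x * f y" "f 0 = 0"
  shows "map_poly f (p * q) = map_poly f p * map_poly f q"
proof (rule poly_eqI)
  fix n
  have f_sum: "f (sum g A) = (\<Sum>a\<in>A. f (g a))" for g and A :: "nat set"
    by (induction A rule: infinite_finite_induct) (simp_all add: assms(1,3))
  show "coeff (map_poly f (p * q)) n = coeff (map_poly f p * map_poly f q) n"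
    by (simp add: coeff_map_poly assms(2,3) coeff_mult f_sum)
qed

lemma neg_one_power_poly: "((-1) :: 'a::comm_ring_1 poly) ^ n = [:(-1) ^ n:]"
  by (induction n) simp_all

text \<open>\<open>sign_flip P\<close> is \<open>P(-alpha, -gamma)\<close>.\<close>

definition sign_flip :: "cpoly2 \<Rightarrow> cpoly2" where
  "sign_flip P = map_poly (\<lambda>q. pcompose q [:0, -1:]) (pcompose P [:0, -1:])"

lemma coeff_sign_flip: "coeff (coeff (sign_flip P) j) i = (-1)^(i + j) * coeff (coeff P j) i"
proof -
  have "coeff (sign_flip P) j = pcompose ((-1)^j * coeff P j) [:0, -1:]"
    by (simp add: sign_flip_def coeff_map_poly coeff_pcompose_linear)
  then show ?thesis by (simp add: coeff_pcompose_linear neg_one_power_poly power_add)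
qed

lemma sign_flip_add: "sign_flip (p + q) = sign_flip p + sign_flip q"
  and sign_flip_mult: "sign_flip (p * q) = sign_flip p * sign_flip q"
  by (simp_all add: sign_flip_def pcompose_add pcompose_mult map_poly_additive
      map_poly_multiplicative)

lemma sign_flip_const: "sign_flip [:[:c:]:] = [:[:c:]:]"
  by (rule poly_eqI, rule poly_eqI, case_tac n, case_tac na) (simp_all add: coeff_sign_flip)

lemma sign_flip_simps:
  "sign_flip 0 = 0" "sign_flip 1 = 1" "sign_flip (- p) = - sign_flip p"
  "sign_flip (of_nat n) = of_nat n" "sign_flip alpha = - alpha" "sign_flip gamma = - gamma"
  using sign_flip_const[of 0] sign_flip_const[of 1] sign_flip_const[of "of_nat n"]
  by (simp_all add: poly_eq_iff coeff_sign_flip of_nat_cpoly2 one_pCons alpha_def gamma_def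
      coeff_pCons split: nat.split)

lemma sign_flip_zeta: "sign_flip (zeta k) = (-1)^k * zeta k"
proof (induction k rule: less_induct)
  case (less k)
  show ?case
  proof (cases k)
    case 0
    then show ?thesis by (simp add: sign_flip_simps)
  next
    case (Suc m)
    have IH1: "sign_flip (zeta m) = (-1)^m * zeta m" using less Suc by simp
    have IH2: "sign_flip (zeta (m - 1)) = (-1)^Suc m * zeta (m - 1)" if "odd m"
    proof -
      have "m - 1 < k" "(-1 :: cpoly2)^(m - 1) = (-1)^Suc m"
        using Suc that by (auto elim!: oddE simp: power_add)
      then show ?thesis using less by simp
    qed
    have IH3: "sign_flip (zeta (m - 2)) = (-1)^m * zeta (m - 2)" if "2 \<le> m"
    proof -
      have "m - 2 < k" "(-1 :: cpoly2)^(m - 2) = (-1)^m"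
        using Suc that by (auto simp: power_diff)
      then show ?thesis using less by simp
    qed
    have "sign_flip (zeta (Suc m)) = sign_flip alpha * sign_flip (zeta m)
        + (if odd m then - of_nat (16 * m^2) * sign_flip (zeta (m - 1)) else 0)
        + (if 2 \<le> m then of_nat (2 * m * (m - 1)) * sign_flip gamma * sign_flip (zeta (m - 2)) else 0)"
      unfolding zeta.simps(2)
      by (simp only: sign_flip_add sign_flip_mult sign_flip_simps if_distrib[of sign_flip])
    then show ?thesis
      unfolding Suc using IH1 IH2 IH3
      by (cases "odd m"; cases "2 \<le> m") (simp_all add: sign_flip_simps zeta.simps(2) algebra_simps)
  qed
qed

lemma sign_flip_Jm: "x \<in> Jm g \<Longrightarrow> sign_flip x \<in> Jm g"
proof -
  assume "x \<in> Jm g"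
  then obtain a b c where x: "x = a * zeta g + b * zeta (g + 1) + c * zeta (g + 2)"
    unfolding Jm_iff by blast
  have "sign_flip x = (sign_flip a * (-1)^g) * zeta g + (sign_flip b * (-1)^(g + 1)) * zeta (g + 1)
      + (sign_flip c * (-1)^(g + 2)) * zeta (g + 2)"
    unfolding x by (simp add: sign_flip_add sign_flip_mult sign_flip_zeta mult_ac)
  then show ?thesis unfolding Jm_iff by blast
qed

definition parity_part :: "nat \<Rightarrow> cpoly2 \<Rightarrow> cpoly2" where
  "parity_part e P = smult [:1/2:] (P + (-1)^e * sign_flip P)"

lemma coeff_parity_part:
  "coeff (coeff (parity_part e P) j) i = (if even (i + j + e) then coeff (coeff P j) i else 0)"
proof -
  have neg_one_power: "((-1) :: cpoly2) ^ e = [:[:(-1) ^ e:]:]"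
    by (simp add: neg_one_power_poly)
  have "coeff (coeff (parity_part e P) j) i
      = (1/2) * (coeff (coeff P j) i + (-1)^(i + j + e) * coeff (coeff P j) i)"
    by (simp add: parity_part_def coeff_sign_flip neg_one_power power_add mult_ac)
  then show ?thesis
    by (cases "even (i + j + e)") (simp_all add: neg_one_even_power neg_one_odd_power)
qed

lemma parity_part_Jm: "x \<in> Jm g \<Longrightarrow> parity_part e x \<in> Jm g"
  unfolding parity_part_def by (simp add: Jm_add Jm_smult Jm_mult_left sign_flip_Jm)

lemma parity_part_diff: "parity_part e (x - y) = parity_part e x - parity_part e y"
  by (rule poly_eqI, rule poly_eqI) (simp add: coeff_parity_part)

section \<open>Counting by degree\<close>

lemma Jm_reduced_eq_0: "x \<in> Jm g \<Longrightarrow> reduced (g div 2) x \<Longrightarrow> x = 0"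
  using Jm_antimono[of "2 * (g div 2)" g] Jm_even_reduced_eq_0 by auto

lemma Jm_reduce: "\<exists>s. reduced (g div 2) s \<and> p - s \<in> Jm g"
proof (cases "even g")
  case True
  then show ?thesis using Jm_even_reduce[of "g div 2" p] by simp
next
  case False
  then show ?thesis using Jm_odd_reduce[of "g div 2" p] by (simp add: odd_two_times_div_two_succ)
qed

definition parity_exps :: "nat \<Rightarrow> nat \<Rightarrow> (nat \<times> nat) set" where
  "parity_exps e k = {(i, j) \<in> reduced_exps k. even (i + j + e)}"

lemma finite_parity_exps: "finite (parity_exps e k)"
  by (rule finite_subset[OF _ finite_reduced_exps[of k]]) (auto simp: parity_exps_def)

lemma card_parity_below_even: "card {i. i < 2 * m \<and> even (i + e)} = m"
proof -
  have "{i. i < 2 * m \<and> even (i + e)} = (\<lambda>t. 2 * t + e mod 2) ` {..<m}"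
  proof (rule set_eqI, rule iffI)
    fix i assume "i \<in> {i. i < 2 * m \<and> even (i + e)}"
    then have "i = 2 * (i div 2) + e mod 2" "i div 2 < m" by auto presburger
    then show "i \<in> (\<lambda>t. 2 * t + e mod 2) ` {..<m}" by blast
  qed auto
  moreover have "inj_on (\<lambda>t. 2 * t + e mod 2) {..<m}" by (auto simp: inj_on_def)
  ultimately show ?thesis by (simp add: card_image)
qed

lemma card_parity_exps: "2 * card (parity_exps e k) = k * (k + 1)"
proof (induction k arbitrary: e)
  case 0
  then show ?case by (simp add: parity_exps_def reduced_exps_def)
next
  case (Suc k)
  let ?shift = "\<lambda>(i, j). (i, Suc j)" and ?row = "{i. i < 2 * Suc k \<and> even (i + e)}"
  have eq: "parity_exps e (Suc k) = ?shift ` parity_exps (Suc e) k \<union> (\<lambda>i. (i, 0)) ` ?row"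
    unfolding parity_exps_def reduced_exps_Suc by auto
  have "card (?shift ` parity_exps (Suc e) k) = card (parity_exps (Suc e) k)"
    by (rule card_image) (auto simp: inj_on_def)
  moreover have "inj_on (\<lambda>i. (i, 0::nat)) ?row" by (auto simp: inj_on_def)
  then have "card ((\<lambda>i. (i, 0::nat)) ` ?row) = Suc k"
    by (simp only: card_image card_parity_below_even)
  moreover have "?shift ` parity_exps (Suc e) k \<inter> (\<lambda>i. (i, 0)) ` ?row = {}" by auto
  ultimately have "card (parity_exps e (Suc k)) = card (parity_exps (Suc e) k) + Suc k"
    unfolding eq by (subst card_Un_disjoint) (simp_all add: finite_parity_exps)
  then show ?case using Suc.IH[of "Suc e"] by simp
qed

lemma hcomp_odd_eq_0:
  assumes "odd r" "x \<in> hcomp r"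
  shows "x = 0"
proof (rule poly_eqI, rule poly_eqI, rule ccontr)
  fix j i assume "coeff (coeff x j) i \<noteq> coeff (coeff 0 j) i"
  then have "(2 * (i + j)) mod 4 = r" using assms(2) by (simp add: hcomp_def)
  then show False using assms(1) by presburger
qed

lemma double_mod_4_eq_iff:
  "r = 0 \<or> r = 2 \<Longrightarrow> (2 * m) mod 4 = r \<longleftrightarrow> even (m + r div 2)" for m r :: nat
  by (elim disjE) presburger+

lemma parity_part_hcomp:
  assumes "r = 0 \<or> r = 2" "x \<in> hcomp r"
  shows "parity_part (r div 2) x = x"
proof (rule poly_eqI, rule poly_eqI)
  fix j i
  have "coeff (coeff x j) i \<noteq> 0 \<Longrightarrow> even (i + j + r div 2)"
    using assms double_mod_4_eq_iff[OF assms(1), of "i + j"] by (simp add: hcomp_def)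
  then show "coeff (coeff (parity_part (r div 2) x) j) i = coeff (coeff x j) i"
    by (auto simp: coeff_parity_part)
qed

lemma ag_monom_in_hcomp:
  "r = 0 \<or> r = 2 \<Longrightarrow> even (i + j + r div 2) \<Longrightarrow> ag_monom i j \<in> hcomp r"
  using double_mod_4_eq_iff[of r "i + j"] by (auto simp: hcomp_def coeff_ag_monom)

lemma sum_cconst_ag_monom:
  "(\<Sum>t\<in>T. cconst (c t) * ag_monom (fst t) (snd t)) = (\<Sum>(i, j)\<in>T. smult [:c (i, j):] (ag_monom i j))"
  by (simp add: cconst_def case_prod_beta')

lemma parity_exps_independent:
  assumes "(\<Sum>t\<in>parity_exps e (g div 2). cconst (c t) * ag_monom (fst t) (snd t)) \<in> Jm g"
  shows "\<forall>t\<in>parity_exps e (g div 2). c t = 0"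
proof -
  let ?T = "parity_exps e (g div 2)"
  have "reduced (g div 2) (\<Sum>(i, j)\<in>?T. smult [:c (i, j):] (ag_monom i j))"
    by (rule reduced_sum_ag_monom) (auto simp: parity_exps_def)
  then have zero: "(\<Sum>(i, j)\<in>?T. smult [:c (i, j):] (ag_monom i j)) = 0"
    using assms Jm_reduced_eq_0 by (simp add: sum_cconst_ag_monom)
  show ?thesis
  proof (intro ballI, clarify)
    fix i j assume "(i, j) \<in> ?T"
    then show "c (i, j) = 0"
      using arg_cong[OF zero, of "\<lambda>x. coeff (coeff x j) i"]
      by (simp add: coeff_sum_ag_monom[OF finite_parity_exps])
  qed
qed

lemma parity_exps_spanning:
  assumes "r = 0 \<or> r = 2" "s \<in> hcomp r"
  shows "\<exists>c. s - (\<Sum>t\<in>parity_exps (r div 2) (g div 2). cconst (c t) * ag_monom (fst t) (snd t)) \<in> Jm g"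
proof -
  let ?e = "r div 2" and ?T = "parity_exps (r div 2) (g div 2)"
  obtain t where t: "reduced (g div 2) t" "s - t \<in> Jm g" using Jm_reduce by blast
  define t' where "t' = parity_part ?e t"
  have "s - t' = parity_part ?e (s - t)"
    unfolding t'_def parity_part_diff parity_part_hcomp[OF assms] ..
  then have "s - t' \<in> Jm g" using parity_part_Jm[OF t(2)] by simp
  moreover have "(i, j) \<in> ?T" if "coeff (coeff t' j) i \<noteq> 0" for i j
    using that t(1) by (auto simp: t'_def coeff_parity_part parity_exps_def reduced_iff_exps
        split: if_splits)
  then have "t' = (\<Sum>(i, j)\<in>?T. smult [:coeff (coeff t' j) i:] (ag_monom i j))"
    by (intro sum_ag_monom_coeffs finite_parity_exps)
  ultimately show ?thesis
    by (intro exI[of _ "\<lambda>(i, j). coeff (coeff t' j) i"]) (simp add: sum_cconst_ag_monom)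
qed

lemma qdim_finite_basis:
  assumes "finite T" "\<And>t. t \<in> T \<Longrightarrow> v t \<in> S"
    and "\<And>c. (\<Sum>t\<in>T. cconst (c t) * v t) \<in> J \<Longrightarrow> \<forall>t\<in>T. c t = 0"
    and "\<And>s. s \<in> S \<Longrightarrow> \<exists>c. s - (\<Sum>t\<in>T. cconst (c t) * v t) \<in> J"
  shows "qdim S J (card T)"
proof -
  obtain h where h: "bij_betw h {..<card T} T"
    using ex_bij_betw_nat_finite[OF assms(1)] by (auto simp: atLeast0LessThan)
  have reindex: "(\<Sum>k<card T. f (h k)) = (\<Sum>t\<in>T. f t)" for f :: "'a \<Rightarrow> cpoly2"
    using sum.reindex_bij_betw[OF h] .
  have hT: "h k \<in> T" if "k < card T" for k
    using h that by (auto simp: bij_betw_def)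
  show ?thesis
    unfolding qdim_def
  proof (intro exI[of _ "v \<circ> h"] conjI allI impI ballI)
    fix k assume "k < card T"
    then show "(v \<circ> h) k \<in> S" using hT assms(2) by simp
  next
    fix c :: "nat \<Rightarrow> complex" and k
    assume comb: "(\<Sum>i<card T. cconst (c i) * (v \<circ> h) i) \<in> J" and "k < card T"
    define c' where "c' = c \<circ> inv_into {..<card T} h"
    have c': "c' (h i) = c i" if "i < card T" for i
      using h that by (simp add: c'_def bij_betw_def inv_into_f_f)
    have "(\<Sum>t\<in>T. cconst (c' t) * v t) = (\<Sum>i<card T. cconst (c i) * (v \<circ> h) i)"
      unfolding reindex[symmetric] by (rule sum.cong) (simp_all add: c')
    then have "(\<Sum>t\<in>T. cconst (c' t) * v t) \<in> J" using comb by simp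
    then show "c k = 0" using assms(3) hT c' \<open>k < card T\<close> by metis
  next
    fix s assume "s \<in> S"
    then obtain c where "s - (\<Sum>t\<in>T. cconst (c t) * v t) \<in> J" using assms(4) by blast
    then show "\<exists>c. s - (\<Sum>i<card T. cconst (c i) * (v \<circ> h) i) \<in> J"
      using reindex[of "\<lambda>t. cconst (c t) * v t"] by (intro exI[of _ "c \<circ> h"]) simp
  qed
qed

theorem corollary5p7:
  fixes g :: nat
  shows "\<forall>r<4. qdim (hcomp r) (Jm g)
           (if r = 0 \<or> r = 2 then (g div 2) * (g div 2 + 1) div 2 else 0)"
proof (intro allI impI)
  fix r :: nat assume "r < 4"
  show "qdim (hcomp r) (Jm g) (if r = 0 \<or> r = 2 then (g div 2) * (g div 2 + 1) div 2 else 0)"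
  proof (cases "r = 0 \<or> r = 2")
    case True
    let ?T = "parity_exps (r div 2) (g div 2)"
    have "qdim (hcomp r) (Jm g) (card ?T)"
    proof (rule qdim_finite_basis[OF finite_parity_exps, where v = "\<lambda>t. ag_monom (fst t) (snd t)"])
      show "ag_monom (fst t) (snd t) \<in> hcomp r" if "t \<in> ?T" for t
        using True that by (auto simp: parity_exps_def intro: ag_monom_in_hcomp)
    qed (use parity_exps_independent parity_exps_spanning[OF True] in blast)+
    moreover have "card ?T = (g div 2) * (g div 2 + 1) div 2"
      by (metis card_parity_exps nonzero_mult_div_cancel_left zero_neq_numeral)
    ultimately show ?thesis using True by simp
  next
    case False
    then have "odd r" using \<open>r < 4\<close> by presburger
    then have "qdim (hcomp r) (Jm g) (card {})"
      by (intro qdim_finite_basis) (auto simp: Jm_0 dest: hcomp_odd_eq_0)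
    then show ?thesis using False by simp
  qed
qed

end
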